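(* Let $X,Z\in\mathbb{R}^{n\times r}$ with $\mathbf{e}:=\mathrm{vec}(XX^{T}-ZZ^{T})\ne0$ and $\sigma_{r}(X)>0$, and let $\alpha=\|Z_{\perp}Z_{\perp}^{T}\|_{F}/\|XX^{T}-ZZ^{T}\|_{F}$ where $Z_{\perp}=(I-XX^{\dagger})Z$. Then for every $w\in\mathbb{R}^{n^{2}}$ with $\|\mathbf{e}\|\,\|(I-\mathbf{J}\mathbf{J}^{\dagger})w\|\le1$, $$\max_{y\in\mathbb{R}^{nr}}\{\mathbf{e}^{T}(\mathbf{J}y-w):\|\mathbf{e}\|\,\|\mathbf{J}y-w\|=1\}=\sqrt{1-\alpha^{2}}\sqrt{1-\|\mathbf{e}\|^{2}\|(I-\mathbf{J}\mathbf{J}^{\dagger})w\|^{2}}-\mathbf{e}^{T}(I-\mathbf{J}\mathbf{J}^{\dagger})w.$$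
   Context: $\mathrm{vec}$ is column-stacking vectorization; $\mathbf{J}\in\mathbb{R}^{n^{2}\times nr}$ satisfies $\mathbf{J}\,\mathrm{vec}(Y)=\mathrm{vec}(XY^{T}+YX^{T})$ for all $Y\in\mathbb{R}^{n\times r}$; $\dagger$ denotes the Moore–Penrose pseudoinverse; $\sigma_{r}(X)$ is the $r$-th largest singular value of $X$. *)

theory Defs
  imports "HOL-Analysis.Analysis"
begin

text \<open>Matrices are Cartesian-type matrices: an n x r real matrix is
  real^'r^'n (rows indexed by 'n, columns by 'r).\<close>

text \<open>Column-stacking
  only fixes an ordering of the index set, which is irrelevant for the Euclidean
  structure (norms, inner products, matrix-vector products).\<close>
definition vecm :: "real^'c^'b \<Rightarrow> real^('b \<times> 'c)" where
  "vecm M = (\<chi> ij. M $ fst ij $ snd ij)"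

definition frob :: "real^'c^'b \<Rightarrow> real" where
  "frob M = norm (vecm M)"

definition pinv :: "real^'c^'b \<Rightarrow> real^'b^'c" where
  "pinv A = (THE B. A ** B ** A = A \<and> B ** A ** B = B \<and>
                    transpose (A ** B) = A ** B \<and> transpose (B ** A) = B ** A)"

definition Jmat :: "real^'r^'n \<Rightarrow> real^('n \<times> 'r)^('n \<times> 'n)" where
  "Jmat X = (THE J. \<forall>Y::real^'r^'n.
      J *v vecm Y = vecm (X ** transpose Y + Y ** transpose X))"

text \<open>k-th largest singular value of a matrix (Courant--Fischer max-min
  characterisation): the max over k-dimensional subspaces V of the min of |Xv|
  over unit vectors v in V.\<close>
definition sing_val :: "real^'r^'n \<Rightarrow> nat \<Rightarrow> real" where
  "sing_val X k = Sup ((\<lambda>V. Inf ((\<lambda>v. norm (X *v v)) ` {v\<in>V. norm v = 1}))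
                       ` {V. subspace V \<and> dim V = k})"

end

(*
  Write R for the range of J, Pr = J J^+ for the orthogonal projector onto R and
  p = (I - Pr) w, which is orthogonal to R.  Substituting u = J y - Pr w, which ranges over
  all of R, the feasible points are J y - w = u - p, so by Pythagoras the constraint reads
  |u|^2 = 1/|e|^2 - |p|^2, and the objective is (Pr e).u - e.p.  By Cauchy-Schwarz its
  maximum is |Pr e| sqrt (1/|e|^2 - |p|^2) - e.p, attained at a multiple of Pr e (or at any
  point of R of the right norm if Pr e = 0; this is where sigma_r(X) > 0 is used, through
  X ~= 0 and hence R ~= {0}).

  It remains to identify |Pr e|.  With Q = I - X X^+ and W = Z_perp Z_perp^T = Q Z Z^T Q,
  every symmetric M has M - Q M Q = S + S^T for some S = Y X^T, so
  e + vec W = vec (X X^T) - vec (Z Z^T - W) lies in R, while Q X = 0 makes vec W orthogonal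
  to R.  Hence Pr e = e + vec W and |Pr e|^2 = |e|^2 - |W|_F^2 = (1 - alpha^2) |e|^2.
*)

theory Submission
  imports Defs
begin

section \<open>Orthogonal projectors\<close>

definition orth_projector :: "real^'n^'n \<Rightarrow> (real^'n) set \<Rightarrow> bool" where
  "orth_projector P R \<longleftrightarrow> (\<forall>x. P *v x \<in> R) \<and> (\<forall>x\<in>R. P *v x = x) \<and> transpose P = P"

lemma symmetric_matrix_inner:
  "transpose A = A \<Longrightarrow> (A *v x) \<bullet> y = x \<bullet> (A *v (y::real^'n))"
  by (metis dot_lmul_matrix inner_commute transpose_matrix_vector)

lemma subspace_range_matrix_vector_mult: "subspace (range ((*v) (A::real^'m^'n)))"
  by (rule linear_subspace_image[OF matrix_vector_mul_linear subspace_UNIV])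

lemma orth_projector_exists:
  fixes R :: "(real^'n) set"
  assumes "subspace R"
  shows "\<exists>P. orth_projector P R"
proof -
  obtain B where B: "B \<subseteq> R" "pairwise orthogonal B" "\<And>b. b \<in> B \<Longrightarrow> norm b = 1"
    "independent B" "span B = R"
    using orthonormal_basis_subspace[OF assms] by metis
  define P :: "real^'n^'n" where "P = (\<chi> i j. \<Sum>b\<in>B. b$i * b$j)"
  have P: "P *v x = (\<Sum>b\<in>B. (b \<bullet> x) *\<^sub>R b)" for x
    by (simp add: vec_eq_iff P_def matrix_vector_mult_def inner_vec_def sum_distrib_left
        sum_distrib_right ac_simps sum.swap[of _ B])
  have "finite B" using B(4) independent_imp_finite by blast
  have in_R: "P *v x \<in> R" for x
    unfolding P using B(1) assms by (intro subspace_sum subspace_scale) auto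
  have "b \<bullet> (x - P *v x) = 0" if "b \<in> B" for b x
  proof -
    have "b \<bullet> (P *v x) = (\<Sum>c\<in>B. if c = b then b \<bullet> x else 0)"
      unfolding P inner_sum_right using B(2,3) that
      by (intro sum.cong) (auto simp: pairwise_def orthogonal_def inner_commute
          simp flip: power2_norm_eq_inner)
    then show ?thesis using \<open>finite B\<close> that by (simp add: inner_diff_right)
  qed
  then have residual: "orthogonal (x - P *v x) u" if "u \<in> R" for x u
    using orthogonal_to_span[of u B] B(5) that by (metis orthogonal_def orthogonal_commute)
  have "P *v x = x" if "x \<in> R" for x
    using residual[of "x - P *v x" x] in_R that assms
    by (metis orthogonal_self subspace_diff eq_iff_diff_eq_0)
  moreover have "transpose P = P"
    by (simp add: P_def transpose_def vec_eq_iff mult.commute)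
  ultimately show ?thesis using in_R by (auto simp: orth_projector_def)
qed

lemma orth_projector_idem: "orth_projector P R \<Longrightarrow> P *v (P *v x) = P *v x"
  by (simp add: orth_projector_def)

lemma orth_projector_residual:
  assumes "orth_projector P R" "u \<in> R"
  shows "(x - P *v x) \<bullet> u = 0"
proof -
  have "(P *v x) \<bullet> u = x \<bullet> u"
    using assms symmetric_matrix_inner unfolding orth_projector_def by metis
  then show ?thesis by (simp add: inner_diff_left)
qed

lemma orth_projector_eq_0:
  assumes "orth_projector P R" "\<And>u. u \<in> R \<Longrightarrow> x \<bullet> u = 0"
  shows "P *v x = 0"
proof -
  have "(P *v x) \<bullet> (P *v x) = x \<bullet> (P *v x)"
    using assms(1) symmetric_matrix_inner orth_projector_idem unfolding orth_projector_def
    by metis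
  then show ?thesis using assms unfolding orth_projector_def by simp
qed

lemma orthogonal_range_transpose_iff:
  fixes A :: "real^'c^'b"
  shows "(\<forall>u\<in>range ((*v) (transpose A)). x \<bullet> u = 0) \<longleftrightarrow> A *v x = 0"
proof
  assume "\<forall>u\<in>range ((*v) (transpose A)). x \<bullet> u = 0"
  then have "x \<bullet> (transpose A *v (A *v x)) = 0" by blast
  then have "(A *v x) \<bullet> (A *v x) = 0" by (simp add: dot_lmul_matrix inner_commute[of x])
  then show "A *v x = 0" by simp
qed (auto simp: dot_lmul_matrix inner_commute[of x])

section \<open>The Moore--Penrose pseudoinverse\<close>

definition is_pinv :: "real^'c^'b \<Rightarrow> real^'b^'c \<Rightarrow> bool" where
  "is_pinv A B \<longleftrightarrow> A ** B ** A = A \<and> B ** A ** B = B \<and>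
     transpose (A ** B) = A ** B \<and> transpose (B ** A) = B ** A"

lemma is_pinv_unique:
  assumes "is_pinv A B" "is_pinv A C"
  shows "B = C"
proof -
  have B: "A ** B ** A = A" "B ** A ** B = B" "transpose (A ** B) = A ** B"
    "transpose (B ** A) = B ** A"
    using assms(1) by (auto simp: is_pinv_def)
  have C: "A ** C ** A = A" "C ** A ** C = C" "transpose (A ** C) = A ** C"
    "transpose (C ** A) = C ** A"
    using assms(2) by (auto simp: is_pinv_def)
  have "B = B ** transpose (A ** B)" using B by (simp add: matrix_mul_assoc)
  also have "\<dots> = B ** transpose B ** transpose (A ** C ** A)"
    using C by (simp add: matrix_transpose_mul matrix_mul_assoc)
  also have "\<dots> = B ** transpose (A ** B) ** transpose (A ** C)"
    by (simp add: matrix_transpose_mul matrix_mul_assoc)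
  also have "\<dots> = B ** A ** C" using B C by (simp add: matrix_mul_assoc)
  finally have BAC: "B = B ** A ** C" .
  have "C = transpose (C ** A) ** C" using C by (simp add: matrix_mul_assoc)
  also have "\<dots> = transpose (A ** B ** A) ** transpose C ** C"
    using B by (simp add: matrix_transpose_mul matrix_mul_assoc)
  also have "\<dots> = transpose (B ** A) ** transpose (C ** A) ** C"
    by (simp add: matrix_transpose_mul matrix_mul_assoc)
  also have "\<dots> = B ** A ** (C ** A ** C)" by (simp only: B(4) C(4) matrix_mul_assoc)
  finally have "C = B ** A ** C" using C(2) by simp
  with BAC show ?thesis by simp
qed

lemma matrix_right_factor_exists:
  fixes A :: "'a::field^'m^'n" and B :: "'a^'k^'n"
  assumes "\<And>x. B *v x \<in> range ((*v) A)"
  shows "\<exists>C. A ** C = B"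
proof -
  have "\<forall>j. \<exists>c. A *v c = B *v axis j 1"
    using assms by (metis rangeE)
  then obtain c where c: "\<And>j. A *v c j = B *v axis j 1"
    by metis
  have "(A ** (\<chi> i j. c j $ i)) $ i $ j = (A *v c j) $ i" for i j
    by (simp add: matrix_matrix_mult_def matrix_vector_mult_def)
  moreover have "(B *v axis j 1) $ i = B $ i $ j" for i j
    by (simp add: matrix_vector_mult_def axis_def if_distrib if_distribR cong: if_cong)
  ultimately have "A ** (\<chi> i j. c j $ i) = B"
    using c by (simp add: vec_eq_iff)
  then show ?thesis ..
qed

lemma is_pinv_exists:
  fixes A :: "real^'c^'b"
  shows "\<exists>B. is_pinv A B"
proof -
  obtain P where P: "orth_projector P (range ((*v) A))"
    using orth_projector_exists[OF subspace_range_matrix_vector_mult] by blast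
  obtain Q where Q: "orth_projector Q (range ((*v) (transpose A)))"
    using orth_projector_exists[OF subspace_range_matrix_vector_mult] by blast
  obtain C where AC: "A ** C = P"
    using matrix_right_factor_exists[of P A] P by (auto simp: orth_projector_def)
  have PA: "P ** A = A"
    using P by (simp add: matrix_eq orth_projector_def flip: matrix_vector_mul_assoc)
  have AQ: "A ** Q = A"
  proof -
    have "A *v (x - Q *v x) = 0" for x
      using orth_projector_residual[OF Q] orthogonal_range_transpose_iff by blast
    then show ?thesis
      by (simp add: matrix_eq matrix_vector_mult_diff_distrib flip: matrix_vector_mul_assoc)
  qed
  have QCA: "Q ** C ** A = Q"
  proof -
    have "A *v (C *v (A *v x)) = A *v x" for x
      using AC PA by (metis matrix_vector_mul_assoc)
    then have "A *v (C *v (A *v x) - x) = 0" for x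
      by (simp add: matrix_vector_mult_diff_distrib)
    then have "Q *v (C *v (A *v x) - x) = 0" for x
      using orth_projector_eq_0[OF Q] orthogonal_range_transpose_iff by blast
    then show ?thesis
      by (simp add: matrix_eq matrix_vector_mult_diff_distrib flip: matrix_vector_mul_assoc)
  qed
  have "is_pinv A (Q ** C ** P)"
  proof -
    have "P ** P = P" "Q ** Q = Q"
      using orth_projector_idem[OF P] orth_projector_idem[OF Q]
      by (simp_all add: matrix_eq flip: matrix_vector_mul_assoc)
    then have "A ** (Q ** C ** P) = P" "Q ** C ** P ** A = Q"
      using AC AQ PA QCA by (metis matrix_mul_assoc)+
    then show ?thesis
      using P Q \<open>P ** P = P\<close> \<open>Q ** Q = Q\<close> AQ AC PA
      unfolding is_pinv_def orth_projector_def by (simp add: matrix_mul_assoc)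
  qed
  then show ?thesis ..
qed

lemma is_pinv_pinv: "is_pinv A (pinv A)"
proof -
  obtain B where B: "is_pinv A B" using is_pinv_exists by blast
  have "pinv A = (THE B. is_pinv A B)" by (simp add: pinv_def is_pinv_def)
  also have "\<dots> = B" using B is_pinv_unique by blast
  finally show ?thesis using B by simp
qed

lemma orth_projector_mult_pinv: "orth_projector (A ** pinv A) (range ((*v) A))"
proof -
  have "A ** pinv A ** A = A" and sym: "transpose (A ** pinv A) = A ** pinv A"
    using is_pinv_pinv[of A] by (auto simp: is_pinv_def)
  then have "A *v (pinv A *v (A *v y)) = A *v y" for y
    by (metis matrix_vector_mul_assoc)
  with sym show ?thesis
    unfolding orth_projector_def by (auto simp flip: matrix_vector_mul_assoc)
qed

section \<open>Vectorization and the matrix J\<close>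

lemma matrix_diff_ldistrib: "(A::real^'m^'n) ** ((B::real^'k^'m) - C) = A ** B - A ** C"
  by (simp add: matrix_matrix_mult_def vec_eq_iff sum_subtractf algebra_simps)

lemma matrix_diff_rdistrib: "((A::real^'m^'n) - B) ** (C::real^'k^'m) = A ** C - B ** C"
  by (simp add: matrix_matrix_mult_def vec_eq_iff sum_subtractf algebra_simps)

lemma transpose_diff: "transpose ((A::real^'m^'n) - B) = transpose A - transpose B"
  by (simp add: transpose_def vec_eq_iff)

definition unvecm :: "real^('b \<times> 'c) \<Rightarrow> real^'c^'b" where
  "unvecm v = (\<chi> i j. v $ (i, j))"

lemma vecm_unvecm [simp]: "vecm (unvecm v) = v"
  by (simp add: vecm_def unvecm_def vec_eq_iff)

lemma unvecm_vecm [simp]: "unvecm (vecm A) = A"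
  by (simp add: vecm_def unvecm_def vec_eq_iff)

lemma vecm_0 [simp]: "vecm 0 = 0"
  by (simp add: vecm_def vec_eq_iff)

lemma vecm_add: "vecm (A + B) = vecm A + vecm B"
  by (simp add: vecm_def vec_eq_iff)

lemma vecm_diff: "vecm (A - B) = vecm A - vecm B"
  by (simp add: vecm_def vec_eq_iff)

lemma inner_vecm: "vecm A \<bullet> vecm B = (\<Sum>i\<in>UNIV. \<Sum>j\<in>UNIV. A $ i $ j * B $ i $ j)"
  by (simp add: inner_vec_def vecm_def sum.cartesian_product case_prod_beta)

lemma inner_vecm_mult_left: "vecm A \<bullet> vecm (B ** C) = vecm (transpose B ** A) \<bullet> vecm C"
proof -
  have "vecm A \<bullet> vecm (B ** C) = (\<Sum>i\<in>UNIV. \<Sum>j\<in>UNIV. \<Sum>k\<in>UNIV. A$i$j * B$i$k * C$k$j)"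
    by (simp add: inner_vecm matrix_matrix_mult_def sum_distrib_left mult.assoc)
  also have "\<dots> = (\<Sum>i\<in>UNIV. \<Sum>k\<in>UNIV. \<Sum>j\<in>UNIV. A$i$j * B$i$k * C$k$j)"
    by (rule sum.cong[OF refl], rule sum.swap)
  also have "\<dots> = (\<Sum>k\<in>UNIV. \<Sum>i\<in>UNIV. \<Sum>j\<in>UNIV. A$i$j * B$i$k * C$k$j)"
    by (rule sum.swap)
  also have "\<dots> = (\<Sum>k\<in>UNIV. \<Sum>j\<in>UNIV. \<Sum>i\<in>UNIV. A$i$j * B$i$k * C$k$j)"
    by (rule sum.cong[OF refl], rule sum.swap)
  also have "\<dots> = vecm (transpose B ** A) \<bullet> vecm C"
    by (simp add: inner_vecm matrix_matrix_mult_def transpose_def sum_distrib_left sum_distrib_right mult_ac)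
  finally show ?thesis .
qed

lemma inner_vecm_mult_right: "vecm A \<bullet> vecm (B ** C) = vecm (A ** transpose C) \<bullet> vecm B"
proof -
  have "vecm A \<bullet> vecm (B ** C) = (\<Sum>i\<in>UNIV. \<Sum>j\<in>UNIV. \<Sum>k\<in>UNIV. A$i$j * B$i$k * C$k$j)"
    by (simp add: inner_vecm matrix_matrix_mult_def sum_distrib_left mult.assoc)
  also have "\<dots> = (\<Sum>i\<in>UNIV. \<Sum>k\<in>UNIV. \<Sum>j\<in>UNIV. A$i$j * B$i$k * C$k$j)"
    by (rule sum.cong[OF refl], rule sum.swap)
  also have "\<dots> = vecm (A ** transpose C) \<bullet> vecm B"
    by (simp add: inner_vecm matrix_matrix_mult_def transpose_def sum_distrib_left sum_distrib_right mult_ac)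
  finally show ?thesis .
qed

lemma Jmat_mult_vecm: "Jmat X *v vecm Y = vecm (X ** transpose Y + Y ** transpose X)"
proof -
  define L where "L y = vecm (X ** transpose (unvecm y) + unvecm y ** transpose X)" for y
  have "linear L"
    by (rule linearI) (simp_all add: L_def vecm_def unvecm_def vec_eq_iff
        matrix_matrix_mult_def transpose_def sum.distrib sum_distrib_left algebra_simps)
  then have L: "matrix L *v y = L y" for y
    by (simp add: matrix_works linear_matrix_vector_mul_eq)
  have "Jmat X = matrix L"
    unfolding Jmat_def
  proof (rule the_equality)
    show "\<forall>Y. matrix L *v vecm Y = vecm (X ** transpose Y + Y ** transpose X)"
      by (simp add: L L_def)
  next
    fix J assume "\<forall>Y. J *v vecm Y = vecm (X ** transpose Y + Y ** transpose X)"
    then show "J = matrix L"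
      by (simp add: matrix_eq L L_def) (metis vecm_unvecm)
  qed
  then show ?thesis by (simp add: L L_def)
qed

lemma vecm_orthogonal_Jmat_range:
  assumes "transpose X ** M = 0" "M ** X = 0"
  shows "vecm M \<bullet> (Jmat X *v y) = 0"
proof -
  define Y where "Y = unvecm y"
  have "vecm M \<bullet> vecm (X ** transpose Y) = 0"
    by (simp only: inner_vecm_mult_left assms(1)) simp
  moreover have "vecm M \<bullet> vecm (Y ** transpose X) = 0"
    by (simp only: inner_vecm_mult_right transpose_transpose assms(2)) simp
  moreover have "Jmat X *v y = vecm (X ** transpose Y) + vecm (Y ** transpose X)"
    using Jmat_mult_vecm[of X Y] by (simp add: Y_def vecm_add)
  ultimately show ?thesis by (simp add: inner_add_right)
qed

lemma vecm_mult_transpose_in_Jmat_range: "vecm (X ** transpose X) \<in> range ((*v) (Jmat X))"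
proof -
  have "Jmat X *v vecm ((1/2) *\<^sub>R X) = vecm (X ** transpose X)"
    by (simp add: Jmat_mult_vecm transpose_scalar matrix_scalar_ac
        flip: scalar_matrix_assoc scaleR_add_left)
  then show ?thesis by (metis rangeI)
qed

lemma vecm_sandwich_residual_in_Jmat_range:
  fixes X :: "real^'r^'n" and M :: "real^'n^'n"
  assumes M: "transpose M = M"
  defines "Q \<equiv> mat 1 - X ** pinv X"
  shows "vecm (M - Q ** M ** Q) \<in> range ((*v) (Jmat X))"
proof -
  define P where "P = X ** pinv X"
  have P: "transpose P = P" and PX: "transpose (pinv X) ** transpose X = P"
    using is_pinv_pinv[of X] by (auto simp: P_def is_pinv_def simp flip: matrix_transpose_mul)
  \<comment> \<open>Split \<open>M - Q M Q = P M + M P - P M P\<close> as \<open>X Y\<^sup>T + Y X\<^sup>T\<close>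
    with \<open>Y X\<^sup>T = M P - P M P / 2\<close>.\<close>
  define Y where "Y = M ** transpose (pinv X) - (1/2) *\<^sub>R (P ** M ** transpose (pinv X))"
  have YX: "Y ** transpose X = M ** P - (1/2) *\<^sub>R (P ** M ** P)"
    by (simp add: Y_def matrix_diff_rdistrib PX flip: scalar_matrix_assoc matrix_mul_assoc)
  have "X ** transpose Y = transpose (Y ** transpose X)"
    by (simp add: matrix_transpose_mul)
  also have "\<dots> = P ** M - (1/2) *\<^sub>R (P ** M ** P)"
    by (simp add: YX transpose_diff transpose_scalar matrix_transpose_mul M P matrix_mul_assoc)
  finally have XY: "X ** transpose Y = P ** M - (1/2) *\<^sub>R (P ** M ** P)" .
  have "X ** transpose Y + Y ** transpose X = P ** M + M ** P - P ** M ** P"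
    unfolding XY YX by (simp add: algebra_simps flip: scaleR_2)
  also have "\<dots> = M - Q ** M ** Q"
    by (simp add: Q_def P_def[symmetric] matrix_diff_ldistrib matrix_diff_rdistrib
        matrix_mul_assoc algebra_simps)
  finally have "Jmat X *v vecm Y = vecm (M - Q ** M ** Q)"
    by (simp add: Jmat_mult_vecm)
  then show ?thesis by (metis rangeI)
qed

lemma Jmat_range_nontrivial:
  fixes X :: "real^'r^'n"
  assumes "X \<noteq> 0"
  shows "range ((*v) (Jmat X)) \<noteq> {0}"
proof -
  obtain i where "X $ i \<noteq> 0" using assms by (metis vec_eq_iff zero_index)
  moreover have "vecm (X ** transpose X) $ (i, i) = X $ i \<bullet> X $ i"
    by (simp add: vecm_def matrix_matrix_mult_def transpose_def inner_vec_def)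
  ultimately have "vecm (X ** transpose X) \<noteq> 0" by auto
  then show ?thesis using vecm_mult_transpose_in_Jmat_range[of X] by blast
qed

lemma sing_val_zero_full: "sing_val (0::real^'r^'n) CARD('r) = 0"
proof -
  have "V = UNIV" if "subspace V" "dim V = CARD('r)" for V :: "(real^'r) set"
    using that dim_eq_full[of V] span_eq_iff[of V] by simp
  then have full: "{V::(real^'r) set. subspace V \<and> dim V = CARD('r)} = {UNIV}"
    by (auto simp: dim_UNIV)
  have unit: "axis undefined 1 \<in> {v::real^'r. norm v = 1}" by simp
  have "(\<lambda>v. norm ((0::real^'r^'n) *v v)) ` {v \<in> UNIV. norm v = 1} = {0}"
    using image_constant[OF unit, of 0] by simp
  then show ?thesis unfolding sing_val_def full by simp
qed

lemma Jmat_projection_norm_squared: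
  fixes X Z :: "real^'r^'n"
  defines "D \<equiv> X ** transpose X - Z ** transpose Z"
    and "Zp \<equiv> (mat 1 - X ** pinv X) ** Z"
  shows "(norm (Jmat X ** pinv (Jmat X) *v vecm D))\<^sup>2 = (frob D)\<^sup>2 - (frob (Zp ** transpose Zp))\<^sup>2"
proof -
  define Q where "Q = mat 1 - X ** pinv X"
  define R where "R = range ((*v) (Jmat X))"
  define Pr where "Pr = Jmat X ** pinv (Jmat X)"
  define W where "W = Zp ** transpose Zp"
  have Pr: "orth_projector Pr R" by (simp add: Pr_def R_def orth_projector_mult_pinv)
  have "subspace R" by (simp add: R_def subspace_range_matrix_vector_mult)
  have Q: "transpose Q = Q" "Q ** X = 0"
    using is_pinv_pinv[of X]
    by (auto simp: Q_def is_pinv_def transpose_diff matrix_diff_rdistrib simp flip: matrix_mul_assoc)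
  have W: "W = Q ** (Z ** transpose Z) ** Q"
    by (simp add: W_def Zp_def Q_def[symmetric] matrix_transpose_mul Q matrix_mul_assoc)
  have "W ** X = 0"
    by (simp add: W Q flip: matrix_mul_assoc)
  moreover have "transpose X ** W = 0"
  proof -
    have "transpose X ** W = transpose (W ** X)"
      by (simp add: W_def matrix_transpose_mul matrix_mul_assoc)
    then show ?thesis by (simp add: \<open>W ** X = 0\<close> transpose_def vec_eq_iff)
  qed
  ultimately have W_orth: "vecm W \<bullet> u = 0" if "u \<in> R" for u
    using vecm_orthogonal_Jmat_range that by (auto simp: R_def)
  have "vecm D + vecm W = vecm (X ** transpose X) - vecm (Z ** transpose Z - W)"
    by (simp add: D_def vecm_diff)
  also have "\<dots> \<in> R"
    using vecm_mult_transpose_in_Jmat_range vecm_sandwich_residual_in_Jmat_range[of "Z ** transpose Z" X]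
      \<open>subspace R\<close>
    by (auto simp: R_def W Q_def matrix_transpose_mul intro: subspace_diff)
  finally have "Pr *v (vecm D + vecm W) = vecm D + vecm W"
    using Pr by (simp add: orth_projector_def)
  moreover have "Pr *v vecm W = 0" using orth_projector_eq_0[OF Pr] W_orth by blast
  ultimately have PrD: "Pr *v vecm D = vecm D + vecm W"
    by (simp add: matrix_vector_right_distrib)
  have "orthogonal (Pr *v vecm D) (- vecm W)"
    using W_orth[of "Pr *v vecm D"] Pr
    by (simp add: orthogonal_def orth_projector_def inner_commute)
  from norm_add_Pythagorean[OF this]
  show ?thesis unfolding Pr_def[symmetric] W_def[symmetric] by (simp add: PrD frob_def)
qed

section \<open>Maximising a linear functional on an affine sphere\<close>

lemma inner_max_on_affine_sphere:
  fixes e h p :: "'a::real_inner"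
  assumes R: "subspace R" "R \<noteq> {0}"
    and h: "h \<in> R" "\<And>u. u \<in> R \<Longrightarrow> (e - h) \<bullet> u = 0"
    and p: "\<And>u. u \<in> R \<Longrightarrow> p \<bullet> u = 0" "norm p \<le> r"
  shows "\<And>u. u \<in> R \<Longrightarrow> norm (u - p) = r \<Longrightarrow>
           e \<bullet> (u - p) \<le> norm h * sqrt (r\<^sup>2 - (norm p)\<^sup>2) - e \<bullet> p"
    and "\<exists>u\<in>R. norm (u - p) = r \<and> e \<bullet> (u - p) = norm h * sqrt (r\<^sup>2 - (norm p)\<^sup>2) - e \<bullet> p"
proof -
  define c where "c = sqrt (r\<^sup>2 - (norm p)\<^sup>2)"
  have "(norm p)\<^sup>2 \<le> r\<^sup>2" using p(2) norm_ge_zero power_mono by blast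
  then have c: "c \<ge> 0" "c\<^sup>2 = r\<^sup>2 - (norm p)\<^sup>2" by (simp_all add: c_def)
  have sphere: "norm (u - p) = r \<longleftrightarrow> norm u = c" if "u \<in> R" for u
  proof -
    have "(norm (u + - p))\<^sup>2 = (norm u)\<^sup>2 + (norm (- p))\<^sup>2"
      using p(1)[OF that] by (intro norm_add_Pythagorean) (simp add: orthogonal_def inner_commute)
    then have pyth: "(norm (u - p))\<^sup>2 = (norm u)\<^sup>2 + (norm p)\<^sup>2" by simp
    have "0 \<le> r" using p(2) norm_ge_zero order_trans by blast
    then have "norm (u - p) = r \<longleftrightarrow> (norm (u - p))\<^sup>2 = r\<^sup>2"
      by (simp add: power2_eq_iff_nonneg)
    also have "\<dots> \<longleftrightarrow> (norm u)\<^sup>2 = c\<^sup>2" using pyth c(2) by linarith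
    also have "\<dots> \<longleftrightarrow> norm u = c" using c(1) by (simp add: power2_eq_iff_nonneg)
    finally show ?thesis .
  qed
  have objective: "e \<bullet> (u - p) = h \<bullet> u - e \<bullet> p" if "u \<in> R" for u
    using h(2)[OF that] by (simp add: inner_diff_left inner_diff_right)
  show "e \<bullet> (u - p) \<le> norm h * sqrt (r\<^sup>2 - (norm p)\<^sup>2) - e \<bullet> p"
    if "u \<in> R" "norm (u - p) = r" for u
    using objective sphere norm_cauchy_schwarz[of h u] that by (simp add: c_def)
  obtain u where "u \<in> R" "norm u = c" "h \<bullet> u = norm h * c"
  proof (cases "h = 0")
    case True
    obtain v where "v \<in> R" "v \<noteq> 0" using R subspace_0 by blast
    then show ?thesis
      using True c(1) by (intro that[of "(c / norm v) *\<^sub>R v"]) (simp_all add: subspace_scale R(1))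
  next
    case False
    then show ?thesis
      using c(1) h(1)
      by (intro that[of "(c / norm h) *\<^sub>R h"])
        (simp_all add: subspace_scale R(1) dot_square_norm power2_eq_square)
  qed
  then show "\<exists>u\<in>R. norm (u - p) = r \<and> e \<bullet> (u - p) = norm h * sqrt (r\<^sup>2 - (norm p)\<^sup>2) - e \<bullet> p"
    using sphere objective by (auto simp: c_def)
qed

lemma inner_max_on_affine_sphere_pinv:
  fixes J :: "real^'m^'k" and e w :: "real^'k"
  defines "Pr \<equiv> J ** pinv J"
  defines "S \<equiv> {e \<bullet> (J *v y - w) | y. norm e * norm (J *v y - w) = 1}"
    and "m \<equiv> norm (Pr *v e) / norm e * sqrt (1 - (norm e)\<^sup>2 * (norm ((mat 1 - Pr) *v w))\<^sup>2)
              - e \<bullet> ((mat 1 - Pr) *v w)"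
  assumes e: "e \<noteq> 0" and J: "range ((*v) J) \<noteq> {0}"
    and w: "norm e * norm ((mat 1 - Pr) *v w) \<le> 1"
  shows "m \<in> S" and "\<forall>t\<in>S. t \<le> m"
proof -
  define R where "R = range ((*v) J)"
  define p where "p = (mat 1 - Pr) *v w"
  define r where "r = 1 / norm e"
  have Pr: "orth_projector Pr R" by (simp add: Pr_def R_def orth_projector_mult_pinv)
  have "subspace R" by (simp add: R_def subspace_range_matrix_vector_mult)
  have p: "p = w - Pr *v w" by (simp add: p_def matrix_vector_mult_diff_rdistrib)
  have "J *v y - w = (J *v y - Pr *v w) - p" for y by (simp add: p)
  moreover have "J *v y - Pr *v w \<in> R" for y
    using Pr \<open>subspace R\<close> by (auto simp: R_def orth_projector_def intro: subspace_diff)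
  moreover have "\<exists>y. J *v y - Pr *v w = u" if "u \<in> R" for u
  proof -
    have "u + Pr *v w \<in> R" using Pr \<open>subspace R\<close> that by (simp add: orth_projector_def subspace_add)
    then show ?thesis by (auto simp: R_def algebra_simps)
  qed
  moreover have "norm e * norm v = 1 \<longleftrightarrow> norm v = r" for v
    using e by (auto simp: r_def field_simps)
  ultimately have S: "S = {e \<bullet> (u - p) | u. u \<in> R \<and> norm (u - p) = r}"
    unfolding S_def by (metis (no_types, opaque_lifting))
  have "sqrt (r\<^sup>2 - (norm p)\<^sup>2) = sqrt ((1 - (norm e)\<^sup>2 * (norm p)\<^sup>2) / (norm e)\<^sup>2)"
    using e by (simp add: r_def power_divide field_simps)
  then have m: "m = norm (Pr *v e) * sqrt (r\<^sup>2 - (norm p)\<^sup>2) - e \<bullet> p"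
    by (simp add: m_def p_def real_sqrt_divide)
  have "R \<noteq> {0}" using J by (simp add: R_def)
  moreover have "Pr *v e \<in> R" using Pr by (simp add: orth_projector_def)
  moreover have "(e - Pr *v e) \<bullet> u = 0" if "u \<in> R" for u
    using orth_projector_residual[OF Pr that] .
  moreover have "p \<bullet> u = 0" if "u \<in> R" for u
    using orth_projector_residual[OF Pr that] by (simp add: p)
  moreover have "norm p \<le> r" using w e by (simp add: p_def r_def field_simps)
  ultimately have "u \<in> R \<Longrightarrow> norm (u - p) = r \<Longrightarrow> e \<bullet> (u - p) \<le> m"
    and "\<exists>u\<in>R. norm (u - p) = r \<and> e \<bullet> (u - p) = m" for u
    using inner_max_on_affine_sphere[OF \<open>subspace R\<close>, of "Pr *v e" e p r] by (simp_all add: m)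
  then show "m \<in> S" and "\<forall>t\<in>S. t \<le> m" by (auto simp: S)
qed

theorem lemma17:
  fixes X Z :: "real^'r^'n"
    and w :: "real^('n \<times> 'n)"
  assumes he: "vecm (X ** transpose X - Z ** transpose Z) \<noteq> 0"
    and hs: "sing_val X CARD('r) > 0"
    and hw: "norm (vecm (X ** transpose X - Z ** transpose Z)) *
             norm ((mat 1 - Jmat X ** pinv (Jmat X)) *v w) \<le> 1"
  shows "let e = vecm (X ** transpose X - Z ** transpose Z);
             J = Jmat X;
             P = mat 1 - J ** pinv J;
             Zp = (mat 1 - X ** pinv X) ** Z;
             \<alpha> = frob (Zp ** transpose Zp) / frob (X ** transpose X - Z ** transpose Z);
             S = {e \<bullet> (J *v y - w) | y. norm e * norm (J *v y - w) = 1};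
             m = sqrt (1 - \<alpha>\<^sup>2) * sqrt (1 - (norm e)\<^sup>2 * (norm (P *v w))\<^sup>2) - e \<bullet> (P *v w)
         in m \<in> S \<and> (\<forall>t\<in>S. t \<le> m)"
proof -
  define D where "D = X ** transpose X - Z ** transpose Z"
  define J where "J = Jmat X"
  define Zp where "Zp = (mat 1 - X ** pinv X) ** Z"
  have "X \<noteq> 0" using hs by (auto simp: sing_val_zero_full)
  then have J: "range ((*v) J) \<noteq> {0}" unfolding J_def by (rule Jmat_range_nontrivial)
  have "(norm (J ** pinv J *v vecm D))\<^sup>2 = (norm (vecm D))\<^sup>2 - (frob (Zp ** transpose Zp))\<^sup>2"
    using Jmat_projection_norm_squared[of X Z] by (simp add: D_def J_def Zp_def frob_def)
  then have "1 - (frob (Zp ** transpose Zp) / frob D)\<^sup>2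
      = (norm (J ** pinv J *v vecm D) / norm (vecm D))\<^sup>2"
    using he by (simp add: D_def frob_def power_divide field_simps)
  then have "sqrt (1 - (frob (Zp ** transpose Zp) / frob D)\<^sup>2)
      = norm (J ** pinv J *v vecm D) / norm (vecm D)"
    by simp
  then show ?thesis
    using inner_max_on_affine_sphere_pinv[of "vecm D" J w] he hw J
    unfolding Let_def D_def[symmetric] J_def[symmetric] Zp_def[symmetric] by simp
qed

end
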